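(* Let $A\in\mathcal A_n$, let $T=\tau(A)$, and fix an integer $g\ge0$. Then $\operatorname{gldim}(A)\le g$ if and only if there are no two siblings $i<j$ in $T$ such that the subtree rooted at $i$ has depth at least $\lfloor g/2\rfloor$ and the subtree rooted at $j$ has depth at least $\lceil g/2\rceil$.
   Context: $\mathcal A_n$ is the set of ordered products $A=A_1\times\cdots\times A_k$ of connected linear Nakayama algebras (over an algebraically closed field) with $n$ simple modules in total; its Kupisch series $[c_0,\dots,c_{n-1}]$ is the concatenation of those of the factors, where a connected linear Nakayama algebra with $m$ simple modules has Kupisch series $[c_0,\dots,c_{m-1}]$, $c_i=\dim e_iA$, characterized by $c_{i+1}+1\ge c_i\ge2$ for $0\le i<m-1$ and $c_{m-1}=1$. The global dimension of $A$ is the maximum of those of its factors. $\tau(A)$ is the tree on $\{0,\dots,n\}$, rooted at $n$, in which the parent of $i$ is $i+c_i$ for $0\le i<n$. Siblings are distinct vertices with the same parent, compared by their labels. The depth of a subtree rooted at a vertex $v$ is the maximal number of edges on a path from $v$ down to a descendant of $v$. *)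

theory Defs
  imports Main
begin

text \<open>Kupisch series of a connected linear Nakayama algebra with m simples:
  c_{m-1} = 1 and c_{i+1} + 1 \<ge> c_i \<ge> 2 for i < m-1.\<close>
definition kupisch_conn :: "nat list \<Rightarrow> bool" where
  "kupisch_conn c \<longleftrightarrow> c \<noteq> [] \<and> last c = 1 \<and>
     (\<forall>i. Suc i < length c \<longrightarrow> 2 \<le> c ! i \<and> c ! i \<le> c ! Suc i + 1)"

text \<open>An algebra in A_n is an ordered list of connected factors; its Kupisch series
  is the concatenation.\<close>
definition kupisch :: "nat list list \<Rightarrow> nat list" where
  "kupisch As = concat As"

text \<open>Projective dimension of the indecomposable module M(i,l) = e_i A / e_i J^l
  (top S_i, length l) over the Nakayama algebra with Kupisch series c.
  Its projective cover is e_i A (length c_i); if l < c_i its syzygy is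
  e_i J^l = M(i+l, c_i - l), otherwise M is projective.\<close>
function pdim :: "nat list \<Rightarrow> nat \<Rightarrow> nat \<Rightarrow> nat" where
  "pdim c i l = (if i < length c \<and> 0 < l \<and> l < c ! i
                 then Suc (pdim c (i + l) (c ! i - l)) else 0)"
  by pat_completeness auto
termination
  by (relation "measure (\<lambda>(c, i, l). length c - i)") auto

text \<open>Global dimension of a connected linear Nakayama algebra: maximum of the
  projective dimensions of the simple modules S_i = M(i,1).\<close>
definition gldim_conn :: "nat list \<Rightarrow> nat" where
  "gldim_conn c = Max (insert 0 {pdim c i 1 | i. i < length c})"

definition gldim :: "nat list list \<Rightarrow> nat" where
  "gldim As = Max (insert 0 (gldim_conn ` set As))"

definition tau_parent :: "nat list \<Rightarrow> nat \<Rightarrow> nat" where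
  "tau_parent c i = i + c ! i"

definition tau_edges :: "nat list \<Rightarrow> (nat \<times> nat) set" where
  "tau_edges c = {(i, tau_parent c i) | i. i < length c}"

definition siblings :: "nat list \<Rightarrow> nat \<Rightarrow> nat \<Rightarrow> bool" where
  "siblings c i j \<longleftrightarrow> i < length c \<and> j < length c \<and> i \<noteq> j \<and>
     tau_parent c i = tau_parent c j"

definition subtree_depth :: "nat list \<Rightarrow> nat \<Rightarrow> nat" where
  "subtree_depth c v = Max {k. \<exists>u. (u, v) \<in> tau_edges c ^^ k}"

end

theory Submission
  imports Defs
begin

(* Let P be the parent map of tau(A), made total by P i = i for i >= n. The Kupisch
   conditions make P monotone with i < P i <= n for i < n. The syzygy of the module
   with composition factors S_u, ..., S_(v-1), where u < v <= P u, has composition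
   factors S_v, ..., S_(P u - 1). Hence the syzygies of S_i are read off the sequence
   x_0 = i, x_1 = i + 1, x_(k+2) = P x_k, and since an equality x_k = x_(k+1) propagates
   to x_(k+2) = x_(k+3), pd S_i > g iff x_g < x_(g+1) < x_(g+2).
   Following the sequence until P x_q = P x_(q+1) yields siblings x_q < x_(q+1), q >= g,
   which are P^(q div 2)- and P^((q+1) div 2)-images, i.e. roots of deep enough
   subtrees. Conversely, for such siblings u < v, the largest i whose ancestor at depth
   g div 2 is u (g even), resp. whose ancestor at depth (g+1) div 2 is v (g odd),
   satisfies pd S_i > g. *)

lemma range_funpow_antimono:
  fixes f :: "'a \<Rightarrow> 'a"
  assumes "d \<le> k"
  shows "range (f ^^ k) \<subseteq> range (f ^^ d)"
proof -
  have "f ^^ k = f ^^ d \<circ> f ^^ (k - d)"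
    using assms by (metis funpow_add le_add_diff_inverse)
  then show ?thesis by auto
qed

(* For P the parent map, the k-th syzygy of the module with composition factors
   S_u, ..., S_(v-1) has composition factors S_x, ..., S_(y-1), where
   x = syz_seq P u v k and y = syz_seq P u v (Suc k). *)
fun syz_seq :: "(nat \<Rightarrow> nat) \<Rightarrow> nat \<Rightarrow> nat \<Rightarrow> nat \<Rightarrow> nat" where
  "syz_seq P u v 0 = u"
| "syz_seq P u v (Suc 0) = v"
| "syz_seq P u v (Suc (Suc k)) = P (syz_seq P u v k)"

lemma syz_seq_Suc: "syz_seq P u v (Suc k) = syz_seq P v (P u) k"
  by (induction P u v k rule: syz_seq.induct) simp_all

lemma syz_seq_even: "syz_seq P u v (2 * t) = (P ^^ t) u"
  by (induction t) (simp_all add: mult_2)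

lemma syz_seq_odd: "syz_seq P u v (Suc (2 * t)) = (P ^^ t) v"
  by (induction t) (simp_all add: mult_2)

lemma syz_seq_funpow: "syz_seq P u v k = (P ^^ (k div 2)) (if even k then u else v)"
proof (cases "even k")
  case True
  then obtain t where "k = 2 * t" by blast
  then show ?thesis by (simp add: syz_seq_even)
next
  case False
  then obtain t where "k = Suc (2 * t)" by (metis oddE Suc_eq_plus1)
  then show ?thesis by (simp add: syz_seq_odd)
qed

lemma syz_seq_in_range:
  assumes "d \<le> k div 2"
  shows "syz_seq P u v k \<in> range (P ^^ d)"
  using range_funpow_antimono[OF assms, of P] unfolding syz_seq_funpow by blast

lemma syz_seq_stable:
  assumes "syz_seq P u v k = syz_seq P u v (Suc k)"
  shows "syz_seq P u v (k + 2 * e) = syz_seq P u v (Suc (k + 2 * e))"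
proof (induction e)
  case (Suc e)
  have "k + 2 * Suc e = Suc (Suc (k + 2 * e))" by simp
  then show ?case using Suc by simp
qed (use assms in simp)

locale parent_map =
  fixes P :: "nat \<Rightarrow> nat" and n :: nat
  assumes mono_parent: "mono P"
    and less_parent: "i < n \<Longrightarrow> i < P i"
    and parent_le: "i < n \<Longrightarrow> P i \<le> n"
    and parent_fixed: "n \<le> i \<Longrightarrow> P i = i"
begin

lemma le_parent: "i \<le> P i"
  using less_parent[of i] parent_fixed[of i] by linarith

lemma parent_le_bound: "i \<le> n \<Longrightarrow> P i \<le> n"
  using parent_le[of i] parent_fixed[of i] by linarith

lemma le_funpow: "i \<le> (P ^^ k) i"
proof (induction k)
  case (Suc k)
  then show ?case using le_parent[of "(P ^^ k) i"] by simp
qed simp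

lemma add_le_funpow: "(P ^^ k) u < n \<Longrightarrow> u + k \<le> (P ^^ k) u"
proof (induction k)
  case (Suc k)
  have "(P ^^ k) u < n"
    using Suc.prems parent_fixed[of "(P ^^ k) u"] by (metis funpow.simps(2) comp_apply not_le)
  then show ?case using Suc.IH less_parent[of "(P ^^ k) u"] by simp
qed simp

lemma funpow_last_preimage:
  assumes "(P ^^ a) w = y" "y < (P ^^ a) z"
  shows "\<exists>i. (P ^^ a) i = y \<and> y < (P ^^ a) (Suc i) \<and> Suc i \<le> z"
proof -
  define S where "S = {x. (P ^^ a) x \<le> y}"
  have "S \<subseteq> {..y}" unfolding S_def using le_funpow order_trans by blast
  then have fin: "finite S" by (rule finite_subset) simp
  have "w \<in> S" using assms(1) by (simp add: S_def)
  then have w: "w \<le> Max S" and max: "Max S \<in> S" using fin by (auto intro: Max_in)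
  have "z \<notin> S" using assms(2) by (simp add: S_def)
  have "(P ^^ a) (Max S) = y"
    using max funpow_mono[OF mono_parent w, of a] assms(1) by (simp add: S_def)
  moreover have "Suc (Max S) \<notin> S" using fin Max_ge Suc_n_not_le_n by blast
  moreover have "Max S < z"
    using \<open>z \<notin> S\<close> funpow_mono[OF mono_parent, of z "Max S" a] max by (force simp: S_def)
  ultimately show ?thesis by (auto simp: S_def)
qed

lemma funpow_le_bound: "i \<le> n \<Longrightarrow> (P ^^ k) i \<le> n"
  by (induction k) (simp_all add: parent_le_bound)

lemma syz_seq_le_bound: "u \<le> n \<Longrightarrow> v \<le> n \<Longrightarrow> syz_seq P u v k \<le> n"
  by (simp add: syz_seq_funpow funpow_le_bound)

lemma syz_seq_mono:
  "u \<le> v \<Longrightarrow> v \<le> P u \<Longrightarrow> syz_seq P u v k \<le> syz_seq P u v (Suc k)"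
proof (induction k arbitrary: u v)
  case (Suc k)
  have "P u \<le> P v" using mono_parent Suc.prems(1) by (rule monoD)
  then show ?case unfolding syz_seq_Suc[of P u v] using Suc by blast
qed simp

lemma syz_seq_strict_iff:
  assumes "u \<le> v" "v \<le> P u"
  shows "(\<forall>k\<le>Suc m. syz_seq P u v k < syz_seq P u v (Suc k)) \<longleftrightarrow>
    syz_seq P u v m < syz_seq P u v (Suc m) \<and>
    syz_seq P u v (Suc m) < syz_seq P u v (Suc (Suc m))"
    (is "(\<forall>k\<le>Suc m. ?x k < ?x (Suc k)) \<longleftrightarrow> _")
proof (intro iffI allI impI)
  assume strict: "\<forall>k\<le>Suc m. ?x k < ?x (Suc k)"
  show "?x m < ?x (Suc m) \<and> ?x (Suc m) < ?x (Suc (Suc m))"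
    using strict[rule_format, of m] strict[rule_format, of "Suc m"] by simp
next
  fix k assume strict: "?x m < ?x (Suc m) \<and> ?x (Suc m) < ?x (Suc (Suc m))" and "k \<le> Suc m"
  show "?x k < ?x (Suc k)"
  proof (rule ccontr)
    assume "\<not> ?x k < ?x (Suc k)"
    then have stable: "?x (k + 2 * e) = ?x (Suc (k + 2 * e))" for e
      using syz_seq_mono[OF assms, of k] by (intro syz_seq_stable) simp
    define e where "e = (Suc m - k) div 2"
    have "k + 2 * e = m \<or> k + 2 * e = Suc m"
      using \<open>k \<le> Suc m\<close> unfolding e_def by presburger
    then show False using strict stable[of e] by (metis less_irrefl)
  qed
qed

lemma syz_seq_reaches_siblings:
  assumes "u \<le> n" "v \<le> n"
  shows "syz_seq P u v m < syz_seq P u v (Suc m) \<Longrightarrow>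
    syz_seq P u v (Suc m) < syz_seq P u v (Suc (Suc m)) \<Longrightarrow>
    \<exists>q\<ge>m. syz_seq P u v q < syz_seq P u v (Suc q) \<and> syz_seq P u v (Suc q) < n \<and>
      P (syz_seq P u v q) = P (syz_seq P u v (Suc q))"
proof (induction "n - syz_seq P u v (Suc m)" arbitrary: m rule: less_induct)
  case less
  let ?x = "syz_seq P u v"
  have bound: "?x (Suc (Suc m)) \<le> n" using assms by (rule syz_seq_le_bound)
  show ?case
  proof (cases "P (?x m) = P (?x (Suc m))")
    case True
    then show ?thesis using less.prems bound by (intro exI[of _ m]) simp
  next
    case False
    have "P (?x m) \<le> P (?x (Suc m))" using mono_parent less.prems(1) by (simp add: monoD)
    with False have "?x (Suc (Suc m)) < ?x (Suc (Suc (Suc m)))" by simp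
    moreover have "n - ?x (Suc (Suc m)) < n - ?x (Suc m)" using less.prems(2) bound by simp
    ultimately obtain q where "Suc m \<le> q" "?x q < ?x (Suc q)" "?x (Suc q) < n"
        "P (?x q) = P (?x (Suc q))"
      using less.hyps[of "Suc m"] less.prems(2) by blast
    then show ?thesis by (intro exI[of _ q]) simp
  qed
qed

lemma strict_syz_triple_imp_siblings:
  assumes "i < n"
    and "syz_seq P i (Suc i) g < syz_seq P i (Suc i) (Suc g)"
    and "syz_seq P i (Suc i) (Suc g) < syz_seq P i (Suc i) (Suc (Suc g))"
  shows "\<exists>u v. u < v \<and> v < n \<and> P u = P v \<and>
    u \<in> range (P ^^ (g div 2)) \<and> v \<in> range (P ^^ ((g + 1) div 2))"
proof -
  obtain q where "g \<le> q"
    and "syz_seq P i (Suc i) q < syz_seq P i (Suc i) (Suc q)"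
    and "syz_seq P i (Suc i) (Suc q) < n"
    and "P (syz_seq P i (Suc i) q) = P (syz_seq P i (Suc i) (Suc q))"
    using syz_seq_reaches_siblings[of i "Suc i" g] assms by auto
  moreover have "syz_seq P i (Suc i) q \<in> range (P ^^ (g div 2))"
    using \<open>g \<le> q\<close> by (intro syz_seq_in_range div_le_mono)
  moreover have "syz_seq P i (Suc i) (Suc q) \<in> range (P ^^ ((g + 1) div 2))"
    using \<open>g \<le> q\<close> by (intro syz_seq_in_range div_le_mono) simp
  ultimately show ?thesis by blast
qed

(* i is the largest vertex whose ancestor at depth g div 2 is u (g even),
   resp. whose ancestor at depth (g + 1) div 2 is v (g odd). *)
lemma siblings_imp_strict_syz_triple:
  assumes "u < v" "v < n" "P u = P v"
    and "u \<in> range (P ^^ (g div 2))" "v \<in> range (P ^^ ((g + 1) div 2))"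
  shows "\<exists>i<n. syz_seq P i (Suc i) g < syz_seq P i (Suc i) (Suc g) \<and>
    syz_seq P i (Suc i) (Suc g) < syz_seq P i (Suc i) (Suc (Suc g))"
proof -
  have "v < P v" using assms(2) by (rule less_parent)
  show ?thesis
  proof (cases "even g")
    case True
    then obtain t where g: "g = 2 * t" by blast
    obtain d e where d: "(P ^^ t) d = u" and e: "(P ^^ t) e = v" using assms(4,5) g by auto
    obtain i where i: "(P ^^ t) i = u" "u < (P ^^ t) (Suc i)" "Suc i \<le> e"
      using funpow_last_preimage[OF d] e assms(1) by blast
    have "(P ^^ t) (Suc i) \<le> v" using funpow_mono[OF mono_parent i(3), of t] e by simp
    moreover have "i < n" using le_funpow[of i t] i assms(1,2) by simp
    ultimately show ?thesis
      using i assms(3) \<open>v < P v\<close>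
      by (intro exI[of _ i]) (simp add: g syz_seq_even syz_seq_odd)
  next
    case False
    then obtain t where g: "g = Suc (2 * t)" by (metis oddE Suc_eq_plus1)
    obtain d e where d: "(P ^^ t) d = u" and e: "(P ^^ Suc t) e = v" using assms(4,5) g by auto
    have "v < (P ^^ Suc t) d" using d assms(3) \<open>v < P v\<close> by simp
    then obtain i where i: "(P ^^ Suc t) i = v" "v < (P ^^ Suc t) (Suc i)" "Suc i \<le> d"
      using funpow_last_preimage[OF e] by blast
    have "(P ^^ t) (Suc i) \<le> u" using funpow_mono[OF mono_parent i(3), of t] d by simp
    moreover have "i < n" using le_funpow[of i "Suc t"] i assms(2) by linarith
    ultimately show ?thesis
      using i assms(1) by (intro exI[of _ i]) (simp add: g syz_seq_even syz_seq_odd)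
  qed
qed

lemma strict_syz_triple_iff_siblings:
  "(\<exists>i<n. syz_seq P i (Suc i) g < syz_seq P i (Suc i) (Suc g) \<and>
      syz_seq P i (Suc i) (Suc g) < syz_seq P i (Suc i) (Suc (Suc g))) \<longleftrightarrow>
   (\<exists>u v. u < v \<and> v < n \<and> P u = P v \<and>
      u \<in> range (P ^^ (g div 2)) \<and> v \<in> range (P ^^ ((g + 1) div 2)))"
  using strict_syz_triple_imp_siblings siblings_imp_strict_syz_triple by blast

end

(* Unlike kupisch_conn this is closed under concatenation; its last condition says
   exactly that kupisch_parent is monotone. *)
definition kupisch_series :: "nat list \<Rightarrow> bool" where
  "kupisch_series c \<longleftrightarrow>
     (\<forall>i<length c. 0 < c ! i \<and> i + c ! i \<le> length c) \<and>
     (\<forall>i. Suc i < length c \<longrightarrow> c ! i \<le> c ! Suc i + 1)"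

lemma kupisch_conn_imp_kupisch_series:
  assumes "kupisch_conn c"
  shows "kupisch_series c"
proof -
  have ne: "c \<noteq> []" and last: "c ! (length c - 1) = 1"
    and succ: "\<And>i. Suc i < length c \<Longrightarrow> 2 \<le> c ! i \<and> c ! i \<le> c ! Suc i + 1"
    using assms by (auto simp: kupisch_conn_def last_conv_nth)
  have pos: "0 < c ! i" if "i < length c" for i
  proof (cases "Suc i < length c")
    case False
    then have "i = length c - 1" using that by simp
    then show ?thesis using last by simp
  qed (use succ in fastforce)
  have bounded: "i + c ! i \<le> length c" if "i \<le> length c - 1" for i
    using that
  proof (induction rule: inc_induct)
    case base
    then show ?case using last ne by simp
  next
    case (step m)
    then show ?case using step(1,2) succ[of m] by linarith
  qed
  show ?thesis
    unfolding kupisch_series_def using pos bounded succ by fastforce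
qed

lemma kupisch_series_append:
  assumes xs: "kupisch_series xs" and ys: "kupisch_series ys"
  shows "kupisch_series (xs @ ys)"
  unfolding kupisch_series_def
proof (intro conjI[OF allI allI] impI)
  fix i assume i: "i < length (xs @ ys)"
  show "0 < (xs @ ys) ! i \<and> i + (xs @ ys) ! i \<le> length (xs @ ys)"
  proof (cases "i < length xs")
    case False
    with i obtain j where "i = length xs + j" "j < length ys"
      by (metis add_diff_inverse_nat length_append nat_add_left_cancel_less)
    then show ?thesis using ys by (auto simp: kupisch_series_def nth_append)
  qed (use xs in \<open>auto simp: kupisch_series_def nth_append\<close>)
next
  fix i assume i: "Suc i < length (xs @ ys)"
  consider "Suc i < length xs" | "Suc i = length xs" | "length xs \<le> i" by linarith
  then show "(xs @ ys) ! i \<le> (xs @ ys) ! Suc i + 1"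
  proof cases
    case 2
    then have "i + xs ! i \<le> Suc i" using xs by (auto simp: kupisch_series_def)
    then show ?thesis using 2 by (simp add: nth_append)
  next
    case 3
    with i obtain j where "i = length xs + j" "Suc j < length ys"
      by (metis add_Suc_right le_add_diff_inverse length_append nat_add_left_cancel_less)
    then show ?thesis using ys by (auto simp: kupisch_series_def nth_append)
  qed (use xs in \<open>auto simp: kupisch_series_def nth_append\<close>)
qed

lemma kupisch_series_concat:
  "\<forall>c\<in>set As. kupisch_conn c \<Longrightarrow> kupisch_series (concat As)"
  by (induction As)
    (simp add: kupisch_series_def, simp add: kupisch_series_append kupisch_conn_imp_kupisch_series)

declare pdim.simps [simp del]

lemma pdim_append_left:
  "kupisch_series xs \<Longrightarrow> i < length xs \<Longrightarrow> pdim (xs @ ys) i l = pdim xs i l"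
proof (induction xs i l rule: pdim.induct)
  case (1 xs i l)
  have "i + xs ! i \<le> length xs" using 1(2,3) by (simp add: kupisch_series_def)
  then show ?case
    using 1 by (subst (1 2) pdim.simps) (auto simp: nth_append)
qed

lemma pdim_append_right: "pdim (xs @ ys) (length xs + i) l = pdim ys i l"
proof (induction ys i l rule: pdim.induct)
  case (1 ys i l)
  then show ?case by (subst (1 2) pdim.simps) (simp add: nth_append add.assoc)
qed

lemma gldim_le_iff:
  assumes "\<forall>c\<in>set As. kupisch_conn c"
  shows "gldim As \<le> g \<longleftrightarrow> (\<forall>i<length (kupisch As). pdim (kupisch As) i 1 \<le> g)"
proof -
  have all_less_add: "(\<forall>i<m + k. Q i) \<longleftrightarrow> (\<forall>i<m. Q i) \<and> (\<forall>j<k. Q (m + j))"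
    for m k :: nat and Q :: "nat \<Rightarrow> bool"
    by (auto, metis le_add_diff_inverse not_le nat_add_left_cancel_less)
  have append: "(\<forall>i<length xs + length ys. pdim (xs @ ys) i l \<le> g) \<longleftrightarrow>
      (\<forall>i<length xs. pdim xs i l \<le> g) \<and> (\<forall>i<length ys. pdim ys i l \<le> g)"
    if "kupisch_series xs" for xs ys l
    using pdim_append_left[OF that] by (simp add: all_less_add pdim_append_right)
  have "gldim As \<le> g \<longleftrightarrow> (\<forall>c\<in>set As. \<forall>i<length c. pdim c i 1 \<le> g)"
    by (auto simp: gldim_def gldim_conn_def)
  also have "\<dots> \<longleftrightarrow> (\<forall>i<length (concat As). pdim (concat As) i 1 \<le> g)"
    using assms by (induction As) (simp_all add: append kupisch_conn_imp_kupisch_series)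
  finally show ?thesis by (simp add: kupisch_def)
qed

definition kupisch_parent :: "nat list \<Rightarrow> nat \<Rightarrow> nat" where
  "kupisch_parent c i = (if i < length c then i + c ! i else i)"

lemma parent_map_kupisch_parent:
  assumes "kupisch_series c"
  shows "parent_map (kupisch_parent c) (length c)"
proof
  have "kupisch_parent c i \<le> kupisch_parent c (Suc i)" for i
    using assms by (cases "Suc i < length c") (auto simp: kupisch_parent_def kupisch_series_def)
  then show "mono (kupisch_parent c)" by (simp add: mono_iff_le_Suc)
qed (use assms in \<open>auto simp: kupisch_parent_def kupisch_series_def\<close>)

lemma pdim_ge_iff_syz_seq:
  assumes c: "kupisch_series c"
  shows "u < v \<Longrightarrow> v \<le> kupisch_parent c u \<Longrightarrow> m \<le> pdim c u (v - u) \<longleftrightarrow>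
    (\<forall>k\<le>m. syz_seq (kupisch_parent c) u v k < syz_seq (kupisch_parent c) u v (Suc k))"
proof (induction m arbitrary: u v)
  case (Suc m)
  interpret parent_map "kupisch_parent c" "length c"
    using c by (rule parent_map_kupisch_parent)
  let ?P = "kupisch_parent c"
  have "u < length c" using Suc.prems parent_fixed[of u] by (cases "u < length c") auto
  then have pdim: "pdim c u (v - u) = (if v < ?P u then Suc (pdim c v (?P u - v)) else 0)"
    using Suc.prems(1) by (subst pdim.simps) (auto simp: kupisch_parent_def add.commute)
  have shift: "(\<forall>k\<le>Suc m. syz_seq ?P u v k < syz_seq ?P u v (Suc k)) \<longleftrightarrow>
      u < v \<and> (\<forall>k\<le>m. syz_seq ?P v (?P u) k < syz_seq ?P v (?P u) (Suc k))"
    unfolding syz_seq_Suc[of ?P u v, symmetric]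
    by (metis Suc_le_mono not0_implies_Suc syz_seq.simps(1,2) le0)
  show ?case
  proof (cases "v < ?P u")
    case True
    have "?P u \<le> ?P v" using mono_parent Suc.prems(1) by (simp add: monoD)
    then show ?thesis using Suc.IH[OF True] Suc.prems(1) True by (simp add: pdim shift)
  next
    case False
    then show ?thesis using Suc.prems(1) by (simp add: pdim shift) (metis le0 syz_seq.simps(1,2))
  qed
qed simp

lemma pdim_simple_le_iff:
  assumes "kupisch_series c" "i < length c"
  shows "pdim c i 1 \<le> g \<longleftrightarrow>
    \<not> (syz_seq (kupisch_parent c) i (Suc i) g < syz_seq (kupisch_parent c) i (Suc i) (Suc g) \<and>
       syz_seq (kupisch_parent c) i (Suc i) (Suc g) <
       syz_seq (kupisch_parent c) i (Suc i) (Suc (Suc g)))"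
proof -
  interpret parent_map "kupisch_parent c" "length c"
    using assms(1) by (rule parent_map_kupisch_parent)
  let ?x = "syz_seq (kupisch_parent c) i (Suc i)"
  have "Suc i \<le> kupisch_parent c i" using less_parent[OF assms(2)] by simp
  then have "Suc g \<le> pdim c i 1 \<longleftrightarrow> (\<forall>k\<le>Suc g. ?x k < ?x (Suc k))"
    using pdim_ge_iff_syz_seq[OF assms(1), of i "Suc i" "Suc g"] by simp
  also have "\<dots> \<longleftrightarrow> ?x g < ?x (Suc g) \<and> ?x (Suc g) < ?x (Suc (Suc g))"
    using \<open>Suc i \<le> kupisch_parent c i\<close> by (intro syz_seq_strict_iff) simp_all
  finally show ?thesis by linarith
qed

lemma siblings_iff_kupisch_parent:
  "siblings c i j \<longleftrightarrow>
    i < length c \<and> j < length c \<and> i \<noteq> j \<and> kupisch_parent c i = kupisch_parent c j"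
  by (auto simp: siblings_def tau_parent_def kupisch_parent_def)

lemma tau_edges_relpow_iff:
  "v < length c \<Longrightarrow> (u, v) \<in> tau_edges c ^^ k \<longleftrightarrow> (kupisch_parent c ^^ k) u = v"
proof (induction k arbitrary: v)
  case (Suc k)
  show ?case
  proof
    assume "(u, v) \<in> tau_edges c ^^ Suc k"
    then obtain y where "(u, y) \<in> tau_edges c ^^ k" "y < length c" "v = kupisch_parent c y"
      by (auto simp: tau_edges_def tau_parent_def kupisch_parent_def)
    then show "(kupisch_parent c ^^ Suc k) u = v" using Suc.IH[of y] by simp
  next
    assume v: "(kupisch_parent c ^^ Suc k) u = v"
    define y where "y = (kupisch_parent c ^^ k) u"
    have "y < length c"
      using v Suc.prems by (cases "y < length c") (auto simp: y_def kupisch_parent_def)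
    then have "(u, y) \<in> tau_edges c ^^ k"
      using Suc.IH[of y] by (simp add: y_def)
    moreover have "(y, v) \<in> tau_edges c"
      using \<open>y < length c\<close> v by (auto simp: y_def tau_edges_def tau_parent_def kupisch_parent_def)
    ultimately show "(u, v) \<in> tau_edges c ^^ Suc k" by auto
  qed
qed simp

lemma subtree_depth_ge_iff:
  assumes c: "kupisch_series c" and v: "v < length c"
  shows "d \<le> subtree_depth c v \<longleftrightarrow> v \<in> range (kupisch_parent c ^^ d)"
proof -
  interpret parent_map "kupisch_parent c" "length c"
    using c by (rule parent_map_kupisch_parent)
  let ?D = "{k. \<exists>u. (u, v) \<in> tau_edges c ^^ k}"
  have "(\<exists>u. (u, v) \<in> tau_edges c ^^ k) \<longleftrightarrow> v \<in> range (kupisch_parent c ^^ k)" for k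
    using tau_edges_relpow_iff[OF v, of _ k] by (metis rangeE rangeI)
  then have D: "?D = {k. v \<in> range (kupisch_parent c ^^ k)}" by simp
  have "k \<le> v" if "v \<in> range (kupisch_parent c ^^ k)" for k
  proof -
    from that obtain u where "v = (kupisch_parent c ^^ k) u" by blast
    then have "u + k \<le> v" using add_le_funpow v by simp
    then show ?thesis by simp
  qed
  then have "?D \<subseteq> {..v}" unfolding D by auto
  then have fin: "finite ?D" by (rule finite_subset) simp
  have "0 \<in> ?D" unfolding D by simp
  then have "?D \<noteq> {}" by blast
  then have "d \<le> subtree_depth c v \<longleftrightarrow> (\<exists>k\<in>?D. d \<le> k)"
    unfolding subtree_depth_def by (rule Max_ge_iff[OF fin])
  also have "\<dots> \<longleftrightarrow> v \<in> range (kupisch_parent c ^^ d)"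
  proof
    assume "\<exists>k\<in>?D. d \<le> k"
    then obtain k where "d \<le> k" "v \<in> range (kupisch_parent c ^^ k)" unfolding D by blast
    then show "v \<in> range (kupisch_parent c ^^ d)"
      using range_funpow_antimono[of d k "kupisch_parent c"] by blast
  next
    assume "v \<in> range (kupisch_parent c ^^ d)"
    then show "\<exists>k\<in>?D. d \<le> k" unfolding D by blast
  qed
  finally show ?thesis .
qed

lemma deep_siblings_iff:
  assumes c: "kupisch_series c"
  shows "(\<exists>i j. i < j \<and> siblings c i j \<and> a \<le> subtree_depth c i \<and> b \<le> subtree_depth c j) \<longleftrightarrow>
    (\<exists>u v. u < v \<and> v < length c \<and> kupisch_parent c u = kupisch_parent c v \<and>
      u \<in> range (kupisch_parent c ^^ a) \<and> v \<in> range (kupisch_parent c ^^ b))"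
proof
  assume "\<exists>i j. i < j \<and> siblings c i j \<and> a \<le> subtree_depth c i \<and> b \<le> subtree_depth c j"
  then obtain i j where "i < j" "siblings c i j" "a \<le> subtree_depth c i" "b \<le> subtree_depth c j"
    by blast
  then show "\<exists>u v. u < v \<and> v < length c \<and> kupisch_parent c u = kupisch_parent c v \<and>
      u \<in> range (kupisch_parent c ^^ a) \<and> v \<in> range (kupisch_parent c ^^ b)"
    using subtree_depth_ge_iff[OF c] by (auto simp: siblings_iff_kupisch_parent)
next
  assume "\<exists>u v. u < v \<and> v < length c \<and> kupisch_parent c u = kupisch_parent c v \<and>
      u \<in> range (kupisch_parent c ^^ a) \<and> v \<in> range (kupisch_parent c ^^ b)"
  then obtain u v where uv: "u < v" "v < length c" "kupisch_parent c u = kupisch_parent c v"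
      and "u \<in> range (kupisch_parent c ^^ a)" "v \<in> range (kupisch_parent c ^^ b)"
    by blast
  moreover have "u < length c" using uv by simp
  ultimately show "\<exists>i j. i < j \<and> siblings c i j \<and> a \<le> subtree_depth c i \<and> b \<le> subtree_depth c j"
    using subtree_depth_ge_iff[OF c]
    by (intro exI[of _ u] exI[of _ v]) (simp add: siblings_iff_kupisch_parent)
qed

theorem lemma3p9:
  fixes As :: "nat list list" and g :: nat
  assumes "\<forall>c \<in> set As. kupisch_conn c"
  shows "gldim As \<le> g \<longleftrightarrow>
    \<not> (\<exists>i j. i < j \<and> siblings (kupisch As) i j \<and>
          g div 2 \<le> subtree_depth (kupisch As) i \<and>
          (g + 1) div 2 \<le> subtree_depth (kupisch As) j)"
proof -
  let ?c = "kupisch As"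
  let ?P = "kupisch_parent ?c"
  have c: "kupisch_series ?c"
    using assms by (simp add: kupisch_def kupisch_series_concat)
  interpret parent_map ?P "length ?c"
    using c by (rule parent_map_kupisch_parent)
  have "gldim As \<le> g \<longleftrightarrow> (\<forall>i<length ?c. pdim ?c i 1 \<le> g)"
    using assms by (rule gldim_le_iff)
  also have "\<dots> \<longleftrightarrow> \<not> (\<exists>i<length ?c. syz_seq ?P i (Suc i) g < syz_seq ?P i (Suc i) (Suc g) \<and>
      syz_seq ?P i (Suc i) (Suc g) < syz_seq ?P i (Suc i) (Suc (Suc g)))"
    using pdim_simple_le_iff[OF c] by blast
  also have "\<dots> \<longleftrightarrow> \<not> (\<exists>u v. u < v \<and> v < length ?c \<and> ?P u = ?P v \<and>
      u \<in> range (?P ^^ (g div 2)) \<and> v \<in> range (?P ^^ ((g + 1) div 2)))"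
    by (simp only: strict_syz_triple_iff_siblings)
  also have "\<dots> \<longleftrightarrow> \<not> (\<exists>i j. i < j \<and> siblings ?c i j \<and>
      g div 2 \<le> subtree_depth ?c i \<and> (g + 1) div 2 \<le> subtree_depth ?c j)"
    by (simp only: deep_siblings_iff[OF c])
  finally show ?thesis .
qed

end
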